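(* Let $\mathcal{Y}_c,\mathcal{Y}$ be output alphabets with $\{0,1,\dots,\alpha\}\subseteq\mathcal{Y}_c\subseteq\mathcal{Y}\subseteq\mathbb{Z}$. Then there exists a function $F_n:\mathcal{Y}^n\to\mathcal{Y}_c^n$ (not depending on $s_0$ or $\mathbf{x}$) such that for every $(s_0,\mathbf{x})\in\mathcal{S}\times\mathcal{X}^n$ and every $\mathbf{y}\in\mathcal{Y}^n(s_0,\mathbf{x})$ we have $F_n(\mathbf{y})\in\mathcal{Y}_c^n(s_0,\mathbf{x})$.
   Context: Fix integers $\alpha\ge 1$ (maximal consumption per step), $\beta\ge 0$ (battery capacity), and $n\ge 1$. Let $\mathcal{X}=\{0,1,\dots,\alpha\}$ and $\mathcal{S}=\{0,1,\dots,\beta\}$. For an initial battery state $s_0\in\mathcal{S}$, a consumption sequence $\mathbf{x}=(x_0,\dots,x_{n-1})\in\mathcal{X}^n$ and a request sequence $\mathbf{y}=(y_0,\dots,y_{n-1})\in\mathbb{Z}^n$, the battery states are $s_i=s_0+\sum_{k=0}^{i-1}y_k-\sum_{k=0}^{i-1}x_k$ for $i=0,1,\dots,n$. For an output alphabet $\mathcal{Y}\subseteq\mathbb{Z}$, the set of feasible requests is $\mathcal{Y}^n(s_0,\mathbf{x})=\{\mathbf{y}\in\mathcal{Y}^n: s_i\in\{0,\dots,\beta\}\text{ for all } i=0,\dots,n\}$. *)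

theory Defs
  imports Main
begin

definition battery_state :: "int \<Rightarrow> int list \<Rightarrow> int list \<Rightarrow> nat \<Rightarrow> int" where
  "battery_state s0 xs ys i = s0 + sum_list (take i ys) - sum_list (take i xs)"

definition feasible_requests :: "int \<Rightarrow> int set \<Rightarrow> nat \<Rightarrow> int \<Rightarrow> int list \<Rightarrow> int list set" where
  "feasible_requests \<beta> Y n s0 xs =
     {ys. length ys = n \<and> set ys \<subseteq> Y \<and>
          (\<forall>i\<le>n. 0 \<le> battery_state s0 xs ys i \<and> battery_state s0 xs ys i \<le> \<beta>)}"

end

theory Submission
  imports Defs
begin

text \<open>Feed the requests through a rate limiter that never delivers more than \<alpha> per step and
keeps the not-yet-delivered part of the requests as a backlog \<open>e\<close>. If \<open>t\<close> is the battery
state under the limited requests, then \<open>t + e\<close> is the state under the original ones, and in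
each step the new limited state is the new original state clamped to an interval
\<open>[t - x, t - x + \<alpha>]\<close>. That interval meets \<open>[0, \<beta>]\<close> because \<open>t \<in> [0, \<beta>]\<close> and \<open>x \<in> [0, \<alpha>]\<close>,
so clamping a point of \<open>[0, \<beta>]\<close> to it stays in \<open>[0, \<beta>]\<close>.\<close>

definition clamp :: "'a::linorder \<Rightarrow> 'a \<Rightarrow> 'a \<Rightarrow> 'a" where
  "clamp lo hi v = max lo (min hi v)"

lemma clamp_mem_atLeastAtMost:
  assumes "lo \<le> M" and "m \<le> hi" and "v \<in> {m..M}"
  shows "clamp lo hi v \<in> {m..M}"
  using assms by (auto simp: clamp_def max_def min_def)

fun rate_limit :: "int \<Rightarrow> int \<Rightarrow> int list \<Rightarrow> int list" where
  "rate_limit a e [] = []"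
| "rate_limit a e (y # ys) = (let z = clamp 0 a (e + y) in z # rate_limit a (e + y - z) ys)"

lemma length_rate_limit [simp]: "length (rate_limit a e ys) = length ys"
  by (induction ys arbitrary: e) (simp_all add: Let_def)

lemma set_rate_limit: "0 \<le> a \<Longrightarrow> set (rate_limit a e ys) \<subseteq> {0..a}"
  by (induction ys arbitrary: e) (auto simp: Let_def clamp_def)

lemma battery_state_0 [simp]: "battery_state s xs ys 0 = s"
  by (simp add: battery_state_def)

lemma battery_state_Cons_Suc [simp]:
  "battery_state s (x # xs) (y # ys) (Suc j) = battery_state (s + y - x) xs ys j"
  by (simp add: battery_state_def)

lemma rate_limit_preserves_bounds:
  assumes "length xs = length ys" and "set xs \<subseteq> {0..a}" and "t \<in> {0..b}"
    and "\<forall>j\<le>length ys. battery_state (t + e) xs ys j \<in> {0..b}"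
  shows "\<forall>j\<le>length ys. battery_state t xs (rate_limit a e ys) j \<in> {0..b}"
  using assms
proof (induction ys arbitrary: xs t e)
  case Nil
  then show ?case by simp
next
  case (Cons y ys)
  then obtain x xs' where xs: "xs = x # xs'"
    by (cases xs) auto
  define z where "z = clamp 0 a (e + y)"
  have x: "x \<in> {0..a}"
    using Cons.prems(2) xs by simp
  have "battery_state (t + e) xs (y # ys) (Suc 0) \<in> {0..b}"
    using Cons.prems(4) by simp
  then have "clamp (t - x) (t - x + a) (t + e + y - x) \<in> {0..b}"
    using x Cons.prems(3) by (intro clamp_mem_atLeastAtMost) (auto simp: xs)
  moreover have "clamp (t - x) (t - x + a) (t + e + y - x) = t + z - x"
    by (simp add: z_def clamp_def)
  ultimately have next_state: "t + z - x \<in> {0..b}"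
    by simp
  have tail: "\<forall>j\<le>length ys. battery_state (t + z - x) xs' (rate_limit a (e + y - z) ys) j \<in> {0..b}"
  proof (rule Cons.IH)
    show "\<forall>j\<le>length ys. battery_state (t + z - x + (e + y - z)) xs' ys j \<in> {0..b}"
      using Cons.prems(4) by (auto simp: xs algebra_simps dest: spec[of _ "Suc _"])
  qed (use Cons.prems(1,2) xs next_state in auto)
  show ?case
  proof (intro allI impI)
    fix j
    assume "j \<le> length (y # ys)"
    then show "battery_state t xs (rate_limit a e (y # ys)) j \<in> {0..b}"
      using tail Cons.prems(3) by (cases j) (auto simp: xs Let_def z_def[symmetric])
  qed
qed

theorem lemma2:
  fixes \<alpha> \<beta> :: int and n :: nat and Yc Y :: "int set"
  assumes "\<alpha> \<ge> 1" and "\<beta> \<ge> 0" and "n \<ge> 1"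
    and "{0..\<alpha>} \<subseteq> Yc" and "Yc \<subseteq> Y"
  shows "\<exists>F :: int list \<Rightarrow> int list.
           (\<forall>ys. length ys = n \<and> set ys \<subseteq> Y \<longrightarrow> length (F ys) = n \<and> set (F ys) \<subseteq> Yc) \<and>
           (\<forall>s0 xs. s0 \<in> {0..\<beta>} \<and> length xs = n \<and> set xs \<subseteq> {0..\<alpha>} \<longrightarrow>
              (\<forall>ys \<in> feasible_requests \<beta> Y n s0 xs. F ys \<in> feasible_requests \<beta> Yc n s0 xs))"
proof (intro exI[of _ "rate_limit \<alpha> 0"] conjI allI impI ballI)
  show set_in_Yc: "set (rate_limit \<alpha> 0 ys) \<subseteq> Yc" for ys
    using set_rate_limit[of \<alpha> 0 ys] assms(1,4) by simp
  show "length (rate_limit \<alpha> 0 ys) = n" if "length ys = n \<and> set ys \<subseteq> Y" for ys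
    using that by simp
  fix s0 xs ys
  assume "s0 \<in> {0..\<beta>} \<and> length xs = n \<and> set xs \<subseteq> {0..\<alpha>}"
    and "ys \<in> feasible_requests \<beta> Y n s0 xs"
  then have "\<forall>j\<le>length ys. battery_state s0 xs (rate_limit \<alpha> 0 ys) j \<in> {0..\<beta>}"
    using rate_limit_preserves_bounds[of xs ys \<alpha> s0 \<beta> 0] by (auto simp: feasible_requests_def)
  then show "rate_limit \<alpha> 0 ys \<in> feasible_requests \<beta> Yc n s0 xs"
    using \<open>ys \<in> feasible_requests \<beta> Y n s0 xs\<close> set_in_Yc
    by (auto simp: feasible_requests_def)
qed

end
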